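(* Let $V$ be a finite set and $A,B\subseteq V$ with $A\cap B\neq\emptyset$, and let $\lambda,\lambda'\in\mathbb{C}$. Then $$f_A^{(\lambda)}f_B^{(\lambda)}=\begin{cases}f_{A\cup B}^{(\lambda)}&\text{if }|A\cap B|=1,\\0&\text{if }|A\cap B|\ge2,\end{cases}$$ and more generally $$f_A^{(\lambda)}f_B^{(\lambda')}=\begin{cases}f_{A\cup B}^{(\lambda'')}&\text{if }|A\cap B|=1,\\0&\text{if }|A\cap B|\ge2,\end{cases}\qquad \lambda''=\frac{(|A|-1)\lambda+(|B|-1)\lambda'}{|A|+|B|-2}=\frac{(|A|-1)\lambda+(|B|-1)\lambda'}{|A\cup B|-1}.$$
   Context: For each $i\in V$ let $\psi_i,\bar\psi_i$ be anticommuting generators of a Grassmann algebra over $\mathbb{C}$. For $A\subseteq V$, $\tau_A=\prod_{i\in A}\bar\psi_i\psi_i$ ($\tau_\emptyset=1$), and for $\lambda\in\mathbb{C}$, $f_A^{(\lambda)}=\lambda(1-|A|)\tau_A+\sum_{i\in A}\tau_{A\setminus\{i\}}-\sum_{i,j\in A,\ i\neq j}\bar\psi_i\psi_j\,\tau_{A\setminus\{i,j\}}$. *)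

theory Defs
  imports Complex_Main
begin

text \<open>
  Grassmann algebra over the complex numbers generated by anticommuting
  generators psi_i, psibar_i (i of a linearly ordered index type).
  A generator is a pair (i, b) with b = False for psi_i and b = True for psibar_i.
  An element is given by its coefficient function on monomials, a monomial
  being a finite set of generators (written as the ordered product of its
  generators, in increasing order w.r.t. gen_less).
\<close>

type_synonym 'a grass = "('a \<times> bool) set \<Rightarrow> complex"

definition gen_less :: "('a::linorder \<times> bool) \<Rightarrow> ('a \<times> bool) \<Rightarrow> bool" where
  "gen_less g h \<longleftrightarrow> fst g < fst h \<or> (fst g = fst h \<and> \<not> snd g \<and> snd h)"

text \<open>Sign obtained when reordering the product of monomial S times monomial T.\<close>
definition gsign :: "('a::linorder \<times> bool) set \<Rightarrow> ('a \<times> bool) set \<Rightarrow> complex" where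
  "gsign S T = (-1) ^ card {(s, t). s \<in> S \<and> t \<in> T \<and> gen_less t s}"

definition gmul :: "'a::linorder grass \<Rightarrow> 'a grass \<Rightarrow> 'a grass" where
  "gmul x y = (\<lambda>U. \<Sum>S\<in>Pow U. gsign S (U - S) * x S * y (U - S))"

definition gadd :: "'a grass \<Rightarrow> 'a grass \<Rightarrow> 'a grass" where
  "gadd x y = (\<lambda>U. x U + y U)"

definition gsub :: "'a grass \<Rightarrow> 'a grass \<Rightarrow> 'a grass" where
  "gsub x y = (\<lambda>U. x U - y U)"

definition gscale :: "complex \<Rightarrow> 'a grass \<Rightarrow> 'a grass" where
  "gscale c x = (\<lambda>U. c * x U)"

definition gsum :: "('b \<Rightarrow> 'a grass) \<Rightarrow> 'b set \<Rightarrow> 'a grass" where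
  "gsum f I = (\<lambda>U. \<Sum>i\<in>I. f i U)"

definition gzero :: "'a grass" where
  "gzero = (\<lambda>U. 0)"

definition gone :: "'a grass" where
  "gone = (\<lambda>U. if U = {} then 1 else 0)"

definition psi :: "'a \<Rightarrow> 'a grass" where
  "psi i = (\<lambda>U. if U = {(i, False)} then 1 else 0)"

definition psibar :: "'a \<Rightarrow> 'a grass" where
  "psibar i = (\<lambda>U. if U = {(i, True)} then 1 else 0)"

text \<open>tau_A = product over i in A of psibar_i psi_i (tau of the empty set is 1);
  the factors are even, so the order (here increasing) is irrelevant.\<close>
definition tau :: "'a::linorder set \<Rightarrow> 'a grass" where
  "tau A = foldr (\<lambda>i acc. gmul (gmul (psibar i) (psi i)) acc) (sorted_list_of_set A) gone"

definition fA :: "complex \<Rightarrow> 'a::linorder set \<Rightarrow> 'a grass" where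
  "fA lam A =
     gsub
       (gadd (gscale (lam * (1 - of_nat (card A))) (tau A))
             (gsum (\<lambda>i. tau (A - {i})) A))
       (gsum (\<lambda>(i, j). gmul (gmul (psibar i) (psi j)) (tau (A - {i, j})))
             {(i, j). i \<in> A \<and> j \<in> A \<and> i \<noteq> j})"

end

theory Submission
  imports Defs
begin

text \<open>
  Every \<open>f_A\<close> is even, hence central. Singling out an index
  \<open>k\<close> with \<open>A = insert k D\<close>, one has
  \<open>f_A = psibar_k psi_k g + tau_D - psibar_k P_D + psi_k Q_D\<close> with
  \<open>P_D = \<Sum>j\<in>D. psi_j tau_(D-{j})\<close> and \<open>Q_D = \<Sum>j\<in>D. psibar_j tau_(D-{j})\<close>, and two such
  expansions at the same \<open>k\<close> multiply by an explicit rule, since the generators at \<open>k\<close> square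
  to zero. The monomials \<open>tau\<close>, the sums \<open>P\<close>, \<open>Q\<close> and the pair sum of \<open>f\<close> obey Leibniz rules on
  disjoint unions, so when \<open>A \<inter> B = {k}\<close> the product of the expansions of \<open>f_A\<close> and \<open>f_B\<close>
  is the expansion of \<open>f_(A \<union> B)\<close>; \<open>lambda''\<close> is the weighted mean of the parameters that makes
  the scalar parts of \<open>g\<close> add up. If \<open>A\<close> and \<open>B\<close> share \<open>k \<noteq> l\<close>, the first case gives
  \<open>f_A = f_{k,l} f_(A-{k})\<close>, and \<open>f_{k,l} f_{k,l} = 0\<close> by direct computation.
\<close>

section \<open>Signs and associativity of the product\<close>


definition inversions :: "('a::linorder \<times> bool) set \<Rightarrow> ('a \<times> bool) set \<Rightarrow> (('a \<times> bool) \<times> ('a \<times> bool)) set"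
  where "inversions S T = {(s, t). s \<in> S \<and> t \<in> T \<and> gen_less t s}"

lemma gsign_inversions: "gsign S T = (-1) ^ card (inversions S T)"
  by (simp add: gsign_def inversions_def)

lemma inversions_subset: "inversions S T \<subseteq> S \<times> T"
  by (auto simp: inversions_def)

lemma finite_inversions: "finite S \<Longrightarrow> finite T \<Longrightarrow> finite (inversions S T)"
  using inversions_subset by (rule finite_subset) simp

lemma gen_less_asym: "gen_less g h \<Longrightarrow> \<not> gen_less h g"
  by (auto simp: gen_less_def)

lemma gen_less_linear: "g \<noteq> h \<Longrightarrow> gen_less g h \<or> gen_less h g"
  by (cases g; cases h) (auto simp: gen_less_def)

lemma card_inversions_Un_left:
  assumes "finite R" "finite T" "finite W" "R \<inter> T = {}"
  shows "card (inversions (R \<union> T) W) = card (inversions R W) + card (inversions T W)"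
proof -
  have "inversions (R \<union> T) W = inversions R W \<union> inversions T W"
    by (auto simp: inversions_def)
  moreover have "inversions R W \<inter> inversions T W = {}"
    using assms(4) by (auto simp: inversions_def)
  ultimately show ?thesis
    using assms by (simp add: card_Un_disjoint finite_inversions)
qed

lemma card_inversions_Un_right:
  assumes "finite R" "finite T" "finite W" "T \<inter> W = {}"
  shows "card (inversions R (T \<union> W)) = card (inversions R T) + card (inversions R W)"
proof -
  have "inversions R (T \<union> W) = inversions R T \<union> inversions R W"
    by (auto simp: inversions_def)
  moreover have "inversions R T \<inter> inversions R W = {}"
    using assms(4) by (auto simp: inversions_def)
  ultimately show ?thesis
    using assms by (simp add: card_Un_disjoint finite_inversions)
qed

lemma card_inversions_swap:
  assumes "finite S" "finite T" "S \<inter> T = {}"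
  shows "card (inversions S T) + card (inversions T S) = card S * card T"
proof -
  have "S \<times> T \<subseteq> inversions S T \<union> prod.swap ` inversions T S"
  proof (rule subrelI)
    fix s t assume "(s, t) \<in> S \<times> T"
    then have "(s, t) \<in> inversions S T \<or> (t, s) \<in> inversions T S"
      using assms(3) gen_less_linear[of s t] by (auto simp: inversions_def)
    then show "(s, t) \<in> inversions S T \<union> prod.swap ` inversions T S"
      by (auto intro: rev_image_eqI)
  qed
  moreover have "prod.swap ` inversions T S \<subseteq> S \<times> T"
    using inversions_subset[of T S] by auto
  ultimately have partition: "S \<times> T = inversions S T \<union> prod.swap ` inversions T S"
    using inversions_subset[of S T] by blast
  have "card (S \<times> T) = card (inversions S T) + card (prod.swap ` inversions T S)"
    unfolding partition
    using assms by (intro card_Un_disjoint finite_imageI finite_inversions)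
      (auto simp: inversions_def dest: gen_less_asym)
  also have "card (prod.swap ` inversions T S) = card (inversions T S)"
    by (rule card_image) simp
  finally show ?thesis
    by (simp add: card_cartesian_product)
qed

lemma gsign_swap:
  assumes "finite S" "finite T" "S \<inter> T = {}"
  shows "gsign S T = (-1) ^ (card S * card T) * gsign T S"
proof -
  let ?a = "card (inversions S T)" and ?b = "card (inversions T S)"
  have "(-1::complex) ^ ?a = (-1) ^ (?a + ?b) * (-1) ^ ?b"
    by (simp add: power_add mult.assoc flip: power_mult_distrib)
  then show ?thesis
    by (simp add: gsign_inversions card_inversions_swap[OF assms])
qed

lemma gsign_cocycle:
  assumes "finite R" "finite T" "finite W" "R \<inter> T = {}" "R \<inter> W = {}" "T \<inter> W = {}"
  shows "gsign R T * gsign (R \<union> T) W = gsign R (T \<union> W) * gsign T W"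
  using assms
  by (simp add: gsign_inversions card_inversions_Un_left card_inversions_Un_right power_add)

lemma sum_Pow_Pow_split:
  assumes "finite U"
  shows "(\<Sum>S\<in>Pow U. \<Sum>R\<in>Pow S. f R (S - R)) = (\<Sum>R\<in>Pow U. \<Sum>T\<in>Pow (U - R). f R T)"
proof -
  have "(\<Sum>S\<in>Pow U. \<Sum>R\<in>Pow S. f R (S - R)) = (\<Sum>(S, R)\<in>Sigma (Pow U) Pow. f R (S - R))"
    using assms by (intro sum.Sigma) (auto dest: finite_subset)
  also have "\<dots> = (\<Sum>(R, T)\<in>Sigma (Pow U) (\<lambda>R. Pow (U - R)). f R T)"
    by (rule sum.reindex_bij_witness[where i = "\<lambda>(R, T). (R \<union> T, R)" and j = "\<lambda>(S, R). (R, S - R)"])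
      auto
  also have "\<dots> = (\<Sum>R\<in>Pow U. \<Sum>T\<in>Pow (U - R). f R T)"
    using assms by (intro sum.Sigma[symmetric]) auto
  finally show ?thesis .
qed

lemma gmul_infinite: "infinite U \<Longrightarrow> gmul x y U = 0"
  by (simp add: gmul_def)

lemma gmul_gmul_left:
  assumes "finite U"
  shows "gmul (gmul x y) z U =
    (\<Sum>R\<in>Pow U. \<Sum>T\<in>Pow (U - R).
       gsign R T * gsign (R \<union> T) (U - R - T) * x R * y T * z (U - R - T))"
proof -
  define f where "f R T = gsign R T * gsign (R \<union> T) (U - R - T) * x R * y T * z (U - R - T)" for R T
  have "gmul (gmul x y) z U = (\<Sum>S\<in>Pow U. \<Sum>R\<in>Pow S. f R (S - R))"
    unfolding gmul_def sum_distrib_left sum_distrib_right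
  proof (intro sum.cong refl)
    fix S R assume "S \<in> Pow U" "R \<in> Pow S"
    then have "R \<union> (S - R) = S" "U - R - (S - R) = U - S"
      by auto
    then show "gsign S (U - S) * (gsign R (S - R) * x R * y (S - R)) * z (U - S) = f R (S - R)"
      unfolding f_def by (simp only: mult_ac)
  qed
  also have "\<dots> = (\<Sum>R\<in>Pow U. \<Sum>T\<in>Pow (U - R). f R T)"
    by (rule sum_Pow_Pow_split[OF assms])
  finally show ?thesis
    unfolding f_def .
qed

lemma gmul_gmul_right:
  "gmul x (gmul y z) U =
    (\<Sum>R\<in>Pow U. \<Sum>T\<in>Pow (U - R).
       gsign R (U - R) * x R * (gsign T (U - R - T) * y T * z (U - R - T)))"
  unfolding gmul_def sum_distrib_left ..

lemma gmul_assoc: "gmul (gmul x y) z = gmul x (gmul y z)"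
proof
  fix U
  show "gmul (gmul x y) z U = gmul x (gmul y z) U"
  proof (cases "finite U")
    case True
    have cocycle: "gsign R T * gsign (R \<union> T) (U - R - T) = gsign R (U - R) * gsign T (U - R - T)"
      if "R \<in> Pow U" "T \<in> Pow (U - R)" for R T
    proof -
      have split: "T \<union> (U - R - T) = U - R"
        using that by auto
      have "finite R" "finite T" "finite (U - R - T)"
        using that True by (auto dest: finite_subset)
      moreover have "R \<inter> T = {}" "R \<inter> (U - R - T) = {}" "T \<inter> (U - R - T) = {}"
        using that by auto
      ultimately have "gsign R T * gsign (R \<union> T) (U - R - T) =
          gsign R (T \<union> (U - R - T)) * gsign T (U - R - T)"
        by (rule gsign_cocycle)
      then show ?thesis
        unfolding split .
    qed
    show ?thesis
      unfolding gmul_gmul_left[OF True] gmul_gmul_right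
    proof (intro sum.cong refl)
      fix R T assume "R \<in> Pow U" "T \<in> Pow (U - R)"
      then show "gsign R T * gsign (R \<union> T) (U - R - T) * x R * y T * z (U - R - T) =
          gsign R (U - R) * x R * (gsign T (U - R - T) * y T * z (U - R - T))"
        by (simp add: cocycle mult_ac)
    qed
  qed (simp add: gmul_infinite)
qed

section \<open>The Grassmann algebra as a ring\<close>

lemma gsign_empty_left [simp]: "gsign {} T = 1"
  by (simp add: gsign_def)

lemma gsign_empty_right [simp]: "gsign S {} = 1"
  by (simp add: gsign_def)

lemma gmul_gscale_gone_left:
  assumes "finite U"
  shows "gmul (gscale c gone) x U = c * x U"
proof -
  have "gmul (gscale c gone) x U = (\<Sum>S\<in>Pow U. if S = {} then c * x (U - S) else 0)"
    unfolding gmul_def gscale_def gone_def by (intro sum.cong) auto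
  also have "\<dots> = c * x U"
    using assms by (subst sum.delta) auto
  finally show ?thesis .
qed

lemma gmul_gscale_gone_right:
  assumes "finite U"
  shows "gmul x (gscale c gone) U = c * x U"
proof -
  have "gmul x (gscale c gone) U = (\<Sum>S\<in>Pow U. if S = U then c * x S else 0)"
    unfolding gmul_def gscale_def gone_def by (intro sum.cong) auto
  also have "\<dots> = c * x U"
    using assms by (subst sum.delta) auto
  finally show ?thesis .
qed

lemma gscale_one [simp]: "gscale 1 x = x"
  by (simp add: gscale_def)

text \<open>Restricting to coefficient functions that vanish on infinite monomials makes \<open>gone\<close>
  a unit: \<open>gmul\<close> is identically zero on infinite monomials.\<close>
typedef 'a grassmann = "{x :: 'a grass. \<forall>U. infinite U \<longrightarrow> x U = 0}"
  morphisms coeff Grassmann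
  by (rule exI[of _ "\<lambda>U. 0"]) simp

setup_lifting type_definition_grassmann

lemma coeff_infinite: "infinite U \<Longrightarrow> coeff x U = 0"
  using coeff[of x] by simp

lemma grassmann_eqI: "(\<And>U. coeff x U = coeff y U) \<Longrightarrow> x = y"
  by (simp add: coeff_inject[symmetric] fun_eq_iff)

instantiation grassmann :: (linorder) ring_1
begin

lift_definition zero_grassmann :: "'a grassmann" is gzero
  by (simp add: gzero_def)

lift_definition one_grassmann :: "'a grassmann" is gone
  by (auto simp: gone_def)

lift_definition plus_grassmann :: "'a grassmann \<Rightarrow> 'a grassmann \<Rightarrow> 'a grassmann" is gadd
  by (simp add: gadd_def)

lift_definition minus_grassmann :: "'a grassmann \<Rightarrow> 'a grassmann \<Rightarrow> 'a grassmann" is gsub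
  by (simp add: gsub_def)

lift_definition uminus_grassmann :: "'a grassmann \<Rightarrow> 'a grassmann" is "\<lambda>x U. - x U"
  by simp

lift_definition times_grassmann :: "'a grassmann \<Rightarrow> 'a grassmann \<Rightarrow> 'a grassmann" is gmul
  by (simp add: gmul_infinite)

instance
proof
  fix a b c :: "'a grassmann"
  show "a * b * c = a * (b * c)"
    by transfer (rule gmul_assoc)
  show "1 * a = a"
    by (rule grassmann_eqI, transfer)
      (metis gmul_gscale_gone_left gmul_infinite gscale_one mult_1)
  show "a * 1 = a"
    by (rule grassmann_eqI, transfer)
      (metis gmul_gscale_gone_right gmul_infinite gscale_one mult_1)
  show "(a + b) * c = a * c + b * c" "a * (b + c) = a * b + a * c"
    by (transfer, simp add: gmul_def gadd_def fun_eq_iff algebra_simps sum.distrib)+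
  show "(0::'a grassmann) \<noteq> 1"
    by (metis (mono_tags) zero_grassmann.rep_eq one_grassmann.rep_eq gzero_def gone_def zero_neq_one)
qed (transfer, simp add: gzero_def gadd_def gsub_def algebra_simps)+

end

lemma coeff_sum: "coeff (sum f I) U = (\<Sum>i\<in>I. coeff (f i) U)"
  by (induction I rule: infinite_finite_induct)
    (simp_all add: zero_grassmann.rep_eq plus_grassmann.rep_eq gzero_def gadd_def)

lift_definition scalar :: "complex \<Rightarrow> 'a::linorder grassmann" is "\<lambda>c. gscale c gone"
  by (auto simp: gscale_def gone_def)

lemma coeff_scalar_mult: "coeff (scalar c * x) = gscale c (coeff x)"
  unfolding fun_eq_iff gscale_def
  by (metis times_grassmann.rep_eq scalar.rep_eq gmul_gscale_gone_left coeff_infinite mult_zero_right)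

lemma scalar_add: "scalar (a + b) = scalar a + scalar b"
  by transfer (simp add: gscale_def gadd_def fun_eq_iff algebra_simps)

lemma scalar_zero [simp]: "scalar 0 = 0"
  by transfer (simp add: gscale_def gzero_def)

lift_definition Psi :: "'a \<Rightarrow> 'a::linorder grassmann" is psi
  by (auto simp: psi_def)

lift_definition Psibar :: "'a \<Rightarrow> 'a::linorder grassmann" is psibar
  by (auto simp: psibar_def)

section \<open>Parity\<close>

definition has_parity :: "bool \<Rightarrow> 'a grassmann \<Rightarrow> bool" where
  "has_parity p x \<longleftrightarrow> (\<forall>U. coeff x U \<noteq> 0 \<longrightarrow> odd (card U) = p)"

lemma coeff_mult_nonzeroE:
  assumes "coeff (x * y) U \<noteq> 0"
  obtains S where "S \<subseteq> U" "finite U" "coeff x S \<noteq> 0" "coeff y (U - S) \<noteq> 0"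
proof -
  have "finite U"
    using assms coeff_infinite by blast
  moreover have "\<exists>S\<in>Pow U. gsign S (U - S) * coeff x S * coeff y (U - S) \<noteq> 0"
    using assms by (auto simp: times_grassmann.rep_eq gmul_def intro: ccontr sum.neutral)
  ultimately show ?thesis
    using that by auto
qed

lemma has_parity_mult:
  assumes "has_parity p x" "has_parity q y"
  shows "has_parity (p \<noteq> q) (x * y)"
  unfolding has_parity_def
proof (intro allI impI)
  fix U assume "coeff (x * y) U \<noteq> 0"
  then obtain S where S: "S \<subseteq> U" "finite U" "coeff x S \<noteq> 0" "coeff y (U - S) \<noteq> 0"
    by (rule coeff_mult_nonzeroE)
  then have "card U = card S + card (U - S)"
    by (metis card_Diff_subset card_mono finite_subset le_add_diff_inverse)
  then show "odd (card U) = (p \<noteq> q)"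
    using S assms by (auto simp: has_parity_def)
qed

lemma has_parity_even_mult: "has_parity False x \<Longrightarrow> has_parity p y \<Longrightarrow> has_parity p (x * y)"
  using has_parity_mult[of False x p y] by simp

lemma has_parity_mult_even: "has_parity p x \<Longrightarrow> has_parity False y \<Longrightarrow> has_parity p (x * y)"
  using has_parity_mult[of p x False y] by simp

lemma has_parity_add: "has_parity p x \<Longrightarrow> has_parity p y \<Longrightarrow> has_parity p (x + y)"
  unfolding has_parity_def plus_grassmann.rep_eq gadd_def by (metis add.left_neutral)

lemma has_parity_diff: "has_parity p x \<Longrightarrow> has_parity p y \<Longrightarrow> has_parity p (x - y)"
  unfolding has_parity_def minus_grassmann.rep_eq gsub_def by (metis diff_zero)

lemma has_parity_sum: "(\<And>i. i \<in> I \<Longrightarrow> has_parity p (f i)) \<Longrightarrow> has_parity p (sum f I)"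
  unfolding has_parity_def coeff_sum by (metis (mono_tags, lifting) sum.neutral)

lemma has_parity_scalar: "has_parity False (scalar c)"
  by (simp add: has_parity_def scalar.rep_eq gscale_def gone_def)

lemma has_parity_one: "has_parity False 1"
  by (simp add: has_parity_def one_grassmann.rep_eq gone_def)

lemma has_parity_Psi: "has_parity True (Psi i)"
  by (simp add: has_parity_def Psi.rep_eq psi_def)

lemma has_parity_Psibar: "has_parity True (Psibar i)"
  by (simp add: has_parity_def Psibar.rep_eq psibar_def)

lemma gmul_reflected:
  assumes "finite U"
  shows "gmul y x U = (\<Sum>S\<in>Pow U. gsign (U - S) S * y (U - S) * x S)"
  unfolding gmul_def
  by (rule sum.reindex_bij_witness[where i = "\<lambda>S. U - S" and j = "\<lambda>S. U - S"]) (auto simp: double_diff)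

lemma even_commute:
  assumes "has_parity False x"
  shows "x * y = y * x"
proof (rule grassmann_eqI)
  fix U
  show "coeff (x * y) U = coeff (y * x) U"
  proof (cases "finite U")
    case True
    have "gsign S (U - S) * coeff x S * coeff y (U - S) = gsign (U - S) S * coeff y (U - S) * coeff x S"
      if "S \<in> Pow U" for S
    proof (cases "coeff x S = 0")
      case False
      then have "even (card S)"
        using assms by (simp add: has_parity_def)
      then show ?thesis
        using gsign_swap[of S "U - S"] that True by (simp add: finite_subset)
    qed simp
    then show ?thesis
      unfolding times_grassmann.rep_eq gmul_reflected[OF True, of "coeff y"] unfolding gmul_def
      by (rule sum.cong[OF refl])
  qed (simp add: coeff_infinite)
qed

lemma odd_anticommute:
  assumes "has_parity True x" "has_parity True y"
  shows "x * y = - (y * x)"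
proof (rule grassmann_eqI)
  fix U
  show "coeff (x * y) U = coeff (- (y * x)) U"
  proof (cases "finite U")
    case True
    have "gsign S (U - S) * coeff x S * coeff y (U - S) = - (gsign (U - S) S * coeff y (U - S) * coeff x S)"
      if "S \<in> Pow U" for S
    proof (cases "coeff x S = 0 \<or> coeff y (U - S) = 0")
      case False
      then have "odd (card S)" "odd (card (U - S))"
        using assms by (auto simp: has_parity_def)
      then show ?thesis
        using gsign_swap[of S "U - S"] that True by (simp add: finite_subset)
    qed auto
    then show ?thesis
      unfolding uminus_grassmann.rep_eq times_grassmann.rep_eq gmul_reflected[OF True, of "coeff y"]
      unfolding gmul_def sum_negf[symmetric]
      by (rule sum.cong[OF refl])
  qed (simp add: coeff_infinite)
qed

lemma odd_square:
  assumes "has_parity True x"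
  shows "x * x = 0"
proof (rule grassmann_eqI)
  fix U
  have "coeff (x * x) U = - coeff (x * x) U"
    using arg_cong[OF odd_anticommute[OF assms assms], of "\<lambda>z. coeff z U"]
    by (simp add: uminus_grassmann.rep_eq)
  then show "coeff (x * x) U = coeff 0 U"
    by (simp add: zero_grassmann.rep_eq gzero_def)
qed

section \<open>Generators and the monomials \<open>tau\<close>\<close>

definition psibar_psi :: "'a \<Rightarrow> 'a::linorder grassmann" where
  "psibar_psi k = Psibar k * Psi k"

lemma has_parity_psibar_psi: "has_parity False (psibar_psi k)"
  unfolding psibar_psi_def using has_parity_mult[OF has_parity_Psibar has_parity_Psi] by simp

lemma psibar_psi_commute: "psibar_psi k * x = x * psibar_psi k"
  by (rule even_commute[OF has_parity_psibar_psi])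

lemma Psi_mult_Psi: "Psi k * Psi k = 0"
  by (rule odd_square[OF has_parity_Psi])

lemma Psibar_mult_Psibar: "Psibar k * Psibar k = 0"
  by (rule odd_square[OF has_parity_Psibar])

lemma Psi_mult_Psibar: "Psi k * Psibar k = - psibar_psi k"
  unfolding psibar_psi_def by (rule odd_anticommute[OF has_parity_Psi has_parity_Psibar])

lemma psibar_psi_mult_Psi: "psibar_psi k * Psi k = 0"
  by (simp add: psibar_psi_def mult.assoc Psi_mult_Psi)

lemma Psibar_mult_psibar_psi: "Psibar k * psibar_psi k = 0"
  by (simp add: psibar_psi_def mult.assoc[symmetric] Psibar_mult_Psibar)

lemma Psi_mult_psibar_psi: "Psi k * psibar_psi k = 0"
  by (metis psibar_psi_commute psibar_psi_mult_Psi)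

lemma psibar_psi_mult_Psibar: "psibar_psi k * Psibar k = 0"
  by (metis psibar_psi_commute Psibar_mult_psibar_psi)

lemma psibar_psi_mult_psibar_psi: "psibar_psi k * psibar_psi k = 0"
proof -
  have "psibar_psi k * psibar_psi k = psibar_psi k * Psibar k * Psi k"
    by (simp add: psibar_psi_def[of k] mult.assoc)
  then show ?thesis
    by (simp add: psibar_psi_mult_Psibar)
qed

lemma foldr_mult_insort:
  fixes g :: "'b::linorder \<Rightarrow> 'a::semigroup_mult"
  assumes "\<And>i j. g i * g j = g j * g i"
  shows "foldr (\<lambda>i acc. g i * acc) (insort x xs) a = g x * foldr (\<lambda>i acc. g i * acc) xs a"
  by (induction xs) (simp_all add: mult.assoc[symmetric] assms)

definition Tau :: "'a::linorder set \<Rightarrow> 'a grassmann" where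
  "Tau A = foldr (\<lambda>i acc. psibar_psi i * acc) (sorted_list_of_set A) 1"

lemma coeff_Tau: "coeff (Tau A) = tau A"
proof -
  have "coeff (foldr (\<lambda>i acc. psibar_psi i * acc) xs 1) =
      foldr (\<lambda>i acc. gmul (gmul (psibar i) (psi i)) acc) xs gone" for xs :: "'a list"
    by (induction xs)
      (simp_all add: psibar_psi_def times_grassmann.rep_eq Psibar.rep_eq Psi.rep_eq one_grassmann.rep_eq)
  then show ?thesis
    by (simp add: Tau_def tau_def)
qed

lemma has_parity_Tau: "has_parity False (Tau A)"
proof -
  have "has_parity False (foldr (\<lambda>i acc. psibar_psi i * acc) xs 1)" for xs :: "'a list"
    by (induction xs) (simp_all add: has_parity_one has_parity_psibar_psi has_parity_even_mult)
  then show ?thesis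
    by (simp add: Tau_def)
qed

lemma Tau_commute: "Tau A * x = x * Tau A"
  by (rule even_commute[OF has_parity_Tau])

lemma Tau_empty [simp]: "Tau {} = 1"
  by (simp add: Tau_def)

lemma Tau_insert: "finite A \<Longrightarrow> k \<notin> A \<Longrightarrow> Tau (insert k A) = psibar_psi k * Tau A"
  unfolding Tau_def by (simp add: foldr_mult_insort[OF psibar_psi_commute])

lemma Tau_singleton [simp]: "Tau {k} = psibar_psi k"
  using Tau_insert[of "{}" k] by simp

lemma Tau_union:
  assumes "finite D" "finite E" "D \<inter> E = {}"
  shows "Tau (D \<union> E) = Tau D * Tau E"
  using assms by (induction D rule: finite_induct) (simp_all add: Tau_insert mult.assoc)

section \<open>The elements \<open>f_A\<close>\<close>

definition Tau_drop1 :: "('a::linorder \<Rightarrow> 'a grassmann) \<Rightarrow> 'a set \<Rightarrow> 'a grassmann" where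
  "Tau_drop1 f D = (\<Sum>j\<in>D. f j * Tau (D - {j}))"

definition Tau_drop2 :: "'a::linorder set \<Rightarrow> 'a grassmann" where
  "Tau_drop2 D = (\<Sum>i\<in>D. Psibar i * Tau_drop1 Psi (D - {i}))"

lemma has_parity_Tau_drop1: "(\<And>j. has_parity p (f j)) \<Longrightarrow> has_parity p (Tau_drop1 f D)"
  unfolding Tau_drop1_def by (intro has_parity_sum has_parity_mult_even has_parity_Tau)

lemma has_parity_Tau_drop2: "has_parity False (Tau_drop2 D)"
  unfolding Tau_drop2_def using has_parity_mult[OF has_parity_Psibar has_parity_Tau_drop1[OF has_parity_Psi]]
  by (intro has_parity_sum) simp

lemma Tau_drop1_singleton [simp]: "Tau_drop1 f {k} = f k"
  by (simp add: Tau_drop1_def)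

lemma Tau_drop2_singleton [simp]: "Tau_drop2 {k} = 0"
  by (simp add: Tau_drop2_def Tau_drop1_def)

lemma Tau_drop1_union:
  assumes "finite D" "finite E" "D \<inter> E = {}"
  shows "Tau_drop1 f (D \<union> E) = Tau_drop1 f D * Tau E + Tau D * Tau_drop1 f E"
proof -
  have "Tau_drop1 f (D \<union> E) = (\<Sum>j\<in>D. f j * Tau (D \<union> E - {j})) + (\<Sum>j\<in>E. f j * Tau (D \<union> E - {j}))"
    unfolding Tau_drop1_def by (rule sum.union_disjoint[OF assms])
  also have "(\<Sum>j\<in>D. f j * Tau (D \<union> E - {j})) = Tau_drop1 f D * Tau E"
    unfolding Tau_drop1_def sum_distrib_right
  proof (rule sum.cong[OF refl])
    fix j assume "j \<in> D"
    then have split: "D \<union> E - {j} = (D - {j}) \<union> E"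
      using assms(3) by auto
    have "Tau ((D - {j}) \<union> E) = Tau (D - {j}) * Tau E"
      using assms by (intro Tau_union) auto
    then show "f j * Tau (D \<union> E - {j}) = f j * Tau (D - {j}) * Tau E"
      unfolding split by (simp add: mult.assoc)
  qed
  also have "(\<Sum>j\<in>E. f j * Tau (D \<union> E - {j})) = Tau D * Tau_drop1 f E"
    unfolding Tau_drop1_def sum_distrib_left
  proof (rule sum.cong[OF refl])
    fix j assume "j \<in> E"
    then have split: "D \<union> E - {j} = D \<union> (E - {j})"
      using assms(3) by auto
    have "Tau (D \<union> (E - {j})) = Tau D * Tau (E - {j})"
      using assms by (intro Tau_union) auto
    then show "f j * Tau (D \<union> E - {j}) = Tau D * (f j * Tau (E - {j}))"
      unfolding split by (metis mult.assoc Tau_commute)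
  qed
  finally show ?thesis .
qed

lemma Tau_drop2_union:
  assumes "finite D" "finite E" "D \<inter> E = {}"
  shows "Tau_drop2 (D \<union> E) = Tau_drop2 D * Tau E + Tau D * Tau_drop2 E
    + Tau_drop1 Psibar D * Tau_drop1 Psi E - Tau_drop1 Psi D * Tau_drop1 Psibar E"
proof -
  let ?P = "Tau_drop1 Psi"
  have "Tau_drop2 (D \<union> E) = (\<Sum>i\<in>D. Psibar i * ?P (D \<union> E - {i})) + (\<Sum>i\<in>E. Psibar i * ?P (D \<union> E - {i}))"
    unfolding Tau_drop2_def by (rule sum.union_disjoint[OF assms])
  also have "(\<Sum>i\<in>D. Psibar i * ?P (D \<union> E - {i})) =
      (\<Sum>i\<in>D. Psibar i * ?P (D - {i}) * Tau E + Psibar i * Tau (D - {i}) * ?P E)"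
  proof (rule sum.cong[OF refl])
    fix i assume "i \<in> D"
    then have split: "D \<union> E - {i} = (D - {i}) \<union> E"
      using assms(3) by auto
    have "?P ((D - {i}) \<union> E) = ?P (D - {i}) * Tau E + Tau (D - {i}) * ?P E"
      using assms by (intro Tau_drop1_union) auto
    then show "Psibar i * ?P (D \<union> E - {i}) = Psibar i * ?P (D - {i}) * Tau E + Psibar i * Tau (D - {i}) * ?P E"
      unfolding split by (simp add: distrib_left mult.assoc)
  qed
  also have "\<dots> = Tau_drop2 D * Tau E + Tau_drop1 Psibar D * ?P E"
    by (simp add: sum.distrib sum_distrib_right Tau_drop2_def Tau_drop1_def[of Psibar])
  also have "(\<Sum>i\<in>E. Psibar i * ?P (D \<union> E - {i})) =
      (\<Sum>i\<in>E. - (?P D * (Psibar i * Tau (E - {i}))) + Tau D * (Psibar i * ?P (E - {i})))"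
  proof (rule sum.cong[OF refl])
    fix i assume "i \<in> E"
    then have split: "D \<union> E - {i} = D \<union> (E - {i})"
      using assms(3) by auto
    have "?P (D \<union> (E - {i})) = ?P D * Tau (E - {i}) + Tau D * ?P (E - {i})"
      using assms by (intro Tau_drop1_union) auto
    moreover have "Psibar i * ?P D = - (?P D * Psibar i)"
      by (rule odd_anticommute[OF has_parity_Psibar has_parity_Tau_drop1[OF has_parity_Psi]])
    moreover have "Psibar i * Tau D = Tau D * Psibar i"
      by (rule Tau_commute[symmetric])
    ultimately show "Psibar i * ?P (D \<union> E - {i}) =
        - (?P D * (Psibar i * Tau (E - {i}))) + Tau D * (Psibar i * ?P (E - {i}))"
      unfolding split by (simp add: distrib_left mult.assoc[symmetric])
  qed
  also have "\<dots> = Tau D * Tau_drop2 E - ?P D * Tau_drop1 Psibar E"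
    by (simp add: sum_subtractf sum_distrib_left Tau_drop2_def Tau_drop1_def[of Psibar])
  finally show ?thesis
    by (simp add: algebra_simps)
qed

lemma Tau_drop1_insert:
  "finite D \<Longrightarrow> k \<notin> D \<Longrightarrow> Tau_drop1 f (insert k D) = f k * Tau D + psibar_psi k * Tau_drop1 f D"
  using Tau_drop1_union[of "{k}" D f] by simp

lemma Tau_drop2_insert:
  "finite D \<Longrightarrow> k \<notin> D \<Longrightarrow> Tau_drop2 (insert k D) =
    psibar_psi k * Tau_drop2 D + Psibar k * Tau_drop1 Psi D - Psi k * Tau_drop1 Psibar D"
  using Tau_drop2_union[of "{k}" D] by simp

definition F :: "complex \<Rightarrow> 'a::linorder set \<Rightarrow> 'a grassmann" where
  "F lam A = scalar (lam * (1 - of_nat (card A))) * Tau A + Tau_drop1 (\<lambda>_. 1) A - Tau_drop2 A"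

lemma Tau_drop2_eq_pairs:
  assumes "finite A"
  shows "Tau_drop2 A = (\<Sum>(i, j)\<in>{(i, j). i \<in> A \<and> j \<in> A \<and> i \<noteq> j}. Psibar i * Psi j * Tau (A - {i, j}))"
proof -
  have "Tau_drop2 A = (\<Sum>i\<in>A. \<Sum>j\<in>A - {i}. Psibar i * Psi j * Tau (A - {i, j}))"
    unfolding Tau_drop2_def Tau_drop1_def sum_distrib_left
    by (intro sum.cong refl) (simp add: mult.assoc Diff_insert2[symmetric])
  also have "\<dots> = (\<Sum>(i, j)\<in>Sigma A (\<lambda>i. A - {i}). Psibar i * Psi j * Tau (A - {i, j}))"
    using assms by (intro sum.Sigma) auto
  also have "Sigma A (\<lambda>i. A - {i}) = {(i, j). i \<in> A \<and> j \<in> A \<and> i \<noteq> j}"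
    by auto
  finally show ?thesis .
qed

lemma coeff_F: "finite A \<Longrightarrow> coeff (F lam A) = fA lam A"
  unfolding F_def fA_def Tau_drop2_eq_pairs Tau_drop1_def minus_grassmann.rep_eq plus_grassmann.rep_eq
    coeff_scalar_mult
  by (simp add: fun_eq_iff coeff_sum coeff_Tau times_grassmann.rep_eq Psi.rep_eq Psibar.rep_eq
      gsub_def gadd_def gsum_def case_prod_beta)

lemma has_parity_F: "has_parity False (F lam A)"
  unfolding F_def
  by (intro has_parity_diff has_parity_add has_parity_even_mult has_parity_scalar has_parity_Tau
      has_parity_Tau_drop1 has_parity_Tau_drop2 has_parity_one)

text \<open>The coefficient of \<open>psibar_psi k\<close> in \<open>F lam (insert k D)\<close>, see \<open>F_insert\<close>.\<close>
definition Fhat :: "complex \<Rightarrow> 'a::linorder set \<Rightarrow> 'a grassmann" where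
  "Fhat lam D = scalar (- lam * of_nat (card D)) * Tau D + Tau_drop1 (\<lambda>_. 1) D - Tau_drop2 D"

lemma has_parity_Fhat: "has_parity False (Fhat lam D)"
  unfolding Fhat_def
  by (intro has_parity_diff has_parity_add has_parity_even_mult has_parity_scalar has_parity_Tau
      has_parity_Tau_drop1 has_parity_Tau_drop2 has_parity_one)

definition expansion :: "'a::linorder \<Rightarrow> 'a grassmann \<Rightarrow> 'a grassmann \<Rightarrow> 'a grassmann \<Rightarrow> 'a grassmann
    \<Rightarrow> 'a grassmann" where
  "expansion k g t p q = psibar_psi k * g + t - Psibar k * p + Psi k * q"

lemma F_insert:
  assumes "finite D" "k \<notin> D"
  shows "F lam (insert k D) = expansion k (Fhat lam D) (Tau D) (Tau_drop1 Psi D) (Tau_drop1 Psibar D)"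
proof -
  have "lam * (1 - of_nat (card (insert k D))) = - lam * of_nat (card D)"
    using assms by (simp add: algebra_simps)
  moreover have "scalar c * (psibar_psi k * Tau D) = psibar_psi k * (scalar c * Tau D)" for c
    by (metis mult.assoc psibar_psi_commute)
  ultimately show ?thesis
    using assms
    by (simp add: F_def Fhat_def expansion_def Tau_insert Tau_drop1_insert Tau_drop2_insert algebra_simps)
qed

lemma expansion_mult:
  assumes "has_parity False g1" "has_parity False t1" "has_parity True p1" "has_parity True q1"
  shows "expansion k g1 t1 p1 q1 * expansion k g2 t2 p2 q2 =
    expansion k (g1 * t2 + t1 * g2 + p1 * q2 - q1 * p2) (t1 * t2) (p1 * t2 + t1 * p2) (q1 * t2 + t1 * q2)"
proof -
  have commute: "u * (c * v) = c * (u * v)" if "has_parity False u \<or> has_parity False c" for u c v :: "'a grassmann"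
    using that even_commute by (metis mult.assoc)
  have anticommute: "u * (c * v) = - (c * (u * v))" if "has_parity True u" "has_parity True c" for u c v :: "'a grassmann"
    using odd_anticommute[OF that] by (metis mult.assoc mult_minus_left)
  have reassoc: "a * (b * w) = c * w" if "a * b = c" for a b c w :: "'a grassmann"
    using that by (simp add: mult.assoc[symmetric])
  note relations = psibar_psi_mult_psibar_psi psibar_psi_mult_Psi psibar_psi_mult_Psibar
    Psi_mult_psibar_psi Psibar_mult_psibar_psi Psi_mult_Psi Psibar_mult_Psibar Psi_mult_Psibar
    psibar_psi_def[symmetric]
  show ?thesis
    unfolding expansion_def
    using assms
    by (simp add: algebra_simps commute[of g1] commute[of t1] commute[of p1 "psibar_psi k"]
        commute[of q1 "psibar_psi k"] anticommute[of p1 "Psi k"] anticommute[of p1 "Psibar k"]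
        anticommute[of q1 "Psi k"] anticommute[of q1 "Psibar k"] relations[THEN reassoc]
        has_parity_psibar_psi has_parity_Psi has_parity_Psibar)
qed

lemma Fhat_union:
  assumes "finite D" "finite E" "D \<inter> E = {}"
    and mu: "mu * of_nat (card D + card E) = lam * of_nat (card D) + lam' * of_nat (card E)"
  shows "Fhat mu (D \<union> E) = Fhat lam D * Tau E + Tau D * Fhat lam' E
    + Tau_drop1 Psi D * Tau_drop1 Psibar E - Tau_drop1 Psibar D * Tau_drop1 Psi E"
proof -
  have "- mu * of_nat (card (D \<union> E)) = - lam * of_nat (card D) + - lam' * of_nat (card E)"
    using assms by (simp add: card_Un_disjoint)
  then have scalar_split: "scalar (- mu * of_nat (card (D \<union> E))) =
      scalar (- lam * of_nat (card D)) + scalar (- lam' * of_nat (card E))"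
    by (simp only: scalar_add)
  have "Tau D * (scalar c * Tau E) = scalar c * (Tau D * Tau E)" for c
    by (metis mult.assoc Tau_commute)
  then show ?thesis
    unfolding Fhat_def scalar_split Tau_union[OF assms(1-3)] Tau_drop1_union[OF assms(1-3)]
      Tau_drop2_union[OF assms(1-3)]
    by (simp add: algebra_simps)
qed

lemma weighted_mean_mult_total:
  fixes lam lam' :: complex
  shows "((of_nat (a + 1) - 1) * lam + (of_nat (b + 1) - 1) * lam') / (of_nat (a + 1) + of_nat (b + 1) - 2)
      * of_nat (a + b) = lam * of_nat a + lam' * of_nat b"
proof (cases "a + b = 0")
  case False
  then have "(of_nat a + of_nat b :: complex) \<noteq> 0"
    by (metis of_nat_add of_nat_eq_0_iff)
  then show ?thesis
    by (simp add: field_simps)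
qed simp

lemma F_mult_F_single_common:
  assumes "finite A" "finite B" "card (A \<inter> B) = 1"
  shows "F lam A * F lam' B =
    F (((of_nat (card A) - 1) * lam + (of_nat (card B) - 1) * lam') / (of_nat (card A) + of_nat (card B) - 2))
      (A \<union> B)"
proof -
  obtain k where k: "A \<inter> B = {k}"
    using assms(3) by (rule card_1_singletonE)
  define D E where "D = A - {k}" and "E = B - {k}"
  define mu where "mu = ((of_nat (card A) - 1) * lam + (of_nat (card B) - 1) * lam')
    / (of_nat (card A) + of_nat (card B) - 2)"
  have A: "A = insert k D" and B: "B = insert k E" and AB: "A \<union> B = insert k (D \<union> E)"
    using k by (auto simp: D_def E_def)
  have fin: "finite D" "finite E" and new: "k \<notin> D" "k \<notin> E" "k \<notin> D \<union> E" and disj: "D \<inter> E = {}"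
    using assms k by (auto simp: D_def E_def)
  have "card A = card D + 1" "card B = card E + 1"
    unfolding A B using fin new by simp_all
  then have "mu * of_nat (card D + card E) = lam * of_nat (card D) + lam' * of_nat (card E)"
    unfolding mu_def by (simp only: weighted_mean_mult_total)
  note Fhat = Fhat_union[OF fin disj this]
  let ?P = "Tau_drop1 Psi" and ?Q = "Tau_drop1 Psibar"
  have "F lam A * F lam' B =
      expansion k (Fhat lam D) (Tau D) (?P D) (?Q D) * expansion k (Fhat lam' E) (Tau E) (?P E) (?Q E)"
    unfolding A B using fin new by (simp add: F_insert)
  also have "\<dots> = expansion k (Fhat mu (D \<union> E)) (Tau (D \<union> E)) (?P (D \<union> E)) (?Q (D \<union> E))"
    unfolding Fhat Tau_union[OF fin disj] Tau_drop1_union[OF fin disj]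
    by (intro expansion_mult has_parity_Fhat has_parity_Tau has_parity_Tau_drop1 has_parity_Psi
        has_parity_Psibar)
  also have "\<dots> = F mu (A \<union> B)"
    unfolding AB using fin new by (simp add: F_insert)
  finally show ?thesis
    unfolding mu_def .
qed

lemma mean_of_equal_params:
  fixes lam :: complex
  assumes "a + b \<noteq> 2"
  shows "((of_nat a - 1) * lam + (of_nat b - 1) * lam) / (of_nat a + of_nat b - 2) = lam"
proof -
  have "(of_nat a + of_nat b - 2 :: complex) \<noteq> 0"
    using assms by (metis eq_iff_diff_eq_0 of_nat_add of_nat_eq_iff of_nat_numeral)
  then show ?thesis
    by (simp add: field_simps)
qed

lemma F_card_one: "card A = 1 \<Longrightarrow> F a A = F b A"
  by (simp add: F_def)

lemma F_mult_F_single_common_same: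
  assumes "finite A" "finite B" "card (A \<inter> B) = 1"
  shows "F lam A * F lam B = F lam (A \<union> B)"
proof (cases "card A + card B = 2")
  case True
  then have "card (A \<union> B) = 1"
    using card_Un_Int[OF assms(1,2)] assms(3) by simp
  then show ?thesis
    using F_mult_F_single_common[OF assms] F_card_one by metis
next
  case False
  then show ?thesis
    using F_mult_F_single_common[OF assms, of lam lam] unfolding mean_of_equal_params[OF False] by blast
qed

lemma F_pair_mult_F_pair:
  assumes "k \<noteq> l"
  shows "F lam {k, l} * F lam' {k, l} = 0"
proof -
  let ?X = "psibar_psi l"
  define G where "G c = scalar (- c) * ?X + 1" for c
  have F_pair: "F c {k, l} = expansion k (G c) ?X (Psi l) (Psibar l)" for c
    using assms F_insert[of "{l}" k c] by (simp add: Fhat_def G_def)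
  have G_X: "G c * ?X = ?X" for c
    by (simp add: G_def distrib_right mult.assoc psibar_psi_mult_psibar_psi)
  have "F lam {k, l} * F lam' {k, l} = expansion k (G lam * ?X + ?X * G lam' + Psi l * Psibar l - Psibar l * Psi l)
      (?X * ?X) (Psi l * ?X + ?X * Psi l) (Psibar l * ?X + ?X * Psibar l)"
    unfolding F_pair G_def
    by (intro expansion_mult has_parity_add has_parity_even_mult has_parity_scalar has_parity_psibar_psi
        has_parity_one has_parity_Psi has_parity_Psibar)
  also have "\<dots> = expansion k 0 0 0 0"
    using G_X psibar_psi_commute[of l "G lam'"]
    by (simp add: psibar_psi_mult_psibar_psi Psi_mult_psibar_psi psibar_psi_mult_Psi Psibar_mult_psibar_psi
        psibar_psi_mult_Psibar Psi_mult_Psibar psibar_psi_def[symmetric])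
  also have "\<dots> = 0"
    by (simp add: expansion_def)
  finally show ?thesis .
qed

lemma F_split_pair:
  assumes "finite A" "k \<noteq> l" "k \<in> A" "l \<in> A"
  shows "F lam A = F lam {k, l} * F lam (A - {k})"
proof -
  have "card {k, l} \<le> card A"
    using assms by (intro card_mono) auto
  then have mean: "card {k, l} + card (A - {k}) \<noteq> 2"
    using assms by simp
  have "card ({k, l} \<inter> (A - {k})) = 1" "{k, l} \<union> (A - {k}) = A"
    using assms by auto
  then show ?thesis
    using F_mult_F_single_common[of "{k, l}" "A - {k}" lam lam] assms(1)
    unfolding mean_of_equal_params[OF mean] by simp
qed

lemma F_mult_F_common_two:
  assumes "finite A" "finite B" "2 \<le> card (A \<inter> B)"
  shows "F lam A * F lam' B = 0"
proof -
  obtain C where "C \<subseteq> A \<inter> B" "card C = 2"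
    using obtain_subset_with_card_n[OF assms(3)] by blast
  then obtain k l where kl: "k \<noteq> l" "k \<in> A \<inter> B" "l \<in> A \<inter> B"
    by (auto simp: card_2_iff)
  let ?a = "F lam {k, l}" and ?b = "F lam (A - {k})" and ?c = "F lam' {k, l}" and ?d = "F lam' (B - {k})"
  have "F lam A * F lam' B = ?a * ((?b * ?c) * ?d)"
    using F_split_pair[OF assms(1) kl(1)] F_split_pair[OF assms(2) kl(1)] kl by (simp add: mult.assoc)
  also have "?b * ?c = ?c * ?b"
    by (rule even_commute[OF has_parity_F])
  also have "?a * ((?c * ?b) * ?d) = (?a * ?c) * (?b * ?d)"
    by (simp only: mult.assoc)
  also have "?a * ?c = 0"
    by (rule F_pair_mult_F_pair[OF kl(1)])
  finally show ?thesis
    by simp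
qed

theorem lemma4p1:
  fixes V :: "'a::linorder set" and A B :: "'a set" and lam lam' :: complex
  assumes "finite V" and "A \<subseteq> V" and "B \<subseteq> V" and "A \<inter> B \<noteq> {}"
  shows "(card (A \<inter> B) = 1 \<longrightarrow> gmul (fA lam A) (fA lam B) = fA lam (A \<union> B))
       \<and> (card (A \<inter> B) \<ge> 2 \<longrightarrow> gmul (fA lam A) (fA lam B) = gzero)
       \<and> (card (A \<inter> B) = 1 \<longrightarrow>
            gmul (fA lam A) (fA lam' B) =
            fA (((of_nat (card A) - 1) * lam + (of_nat (card B) - 1) * lam')
                  / (of_nat (card A) + of_nat (card B) - 2)) (A \<union> B))
       \<and> (card (A \<inter> B) = 1 \<longrightarrow>
            gmul (fA lam A) (fA lam' B) =
            fA (((of_nat (card A) - 1) * lam + (of_nat (card B) - 1) * lam')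
                  / (of_nat (card (A \<union> B)) - 1)) (A \<union> B))
       \<and> (card (A \<inter> B) \<ge> 2 \<longrightarrow> gmul (fA lam A) (fA lam' B) = gzero)"
proof -
  have fin: "finite A" "finite B"
    using assms finite_subset by auto
  have product: "gmul (fA a A) (fA b B) = coeff (F a A * F b B)" for a b
    using fin by (simp add: times_grassmann.rep_eq coeff_F)
  have union: "fA c (A \<union> B) = coeff (F c (A \<union> B))" for c
    using fin by (simp add: coeff_F)
  have zero: "gzero = coeff 0"
    by (simp add: zero_grassmann.rep_eq)
  have denominator: "of_nat (card A) + of_nat (card B) - 2 = (of_nat (card (A \<union> B)) - 1 :: complex)"
    if "card (A \<inter> B) = 1"
    using card_Un_Int[OF fin] that by (simp add: algebra_simps flip: of_nat_add)
  show ?thesis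
    unfolding product union zero
    using F_mult_F_single_common[OF fin] F_mult_F_single_common_same[OF fin] F_mult_F_common_two[OF fin]
      denominator
    by simp
qed

end
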